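(* Let $a\in\mathbb{C}$ with $|a-\tfrac14|=\tfrac14$ and $a\neq 0$, and let $\varphi(z)=az^2+(1-2a)z+a$. Then the iterates $\varphi_n$ converge to the constant $1$ uniformly on all of $\mathbb{D}$, i.e. $\lim_{n\to\infty}\sup_{z\in\mathbb{D}}|\varphi_n(z)-1|=0$.
   Context: $\mathbb{D}$ is the open unit disk. $\varphi_n$ denotes the $n$-th iterate $\varphi\circ\cdots\circ\varphi$ ($n$ times). Such $\varphi$ is an analytic self-map of $\mathbb{D}$ with $\varphi(1)=1$, $\varphi'(1)=1$. *)

theory Defs
  imports "HOL-Analysis.Analysis"
begin

end

theory Submission
  imports Defs "HOL-Library.While_Combinator" "HOL-Real_Asymp.Real_Asymp"
begin

text \<open>Translating by \<open>-1\<close> conjugates \<open>\<phi>\<close> to \<open>\<psi>(w) = w + a w\<^sup>2\<close>, which fixes \<open>0\<close> and maps the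
  disc \<open>|w + 1| < 1\<close> into itself. In the coordinate \<open>\<zeta> = 1/w\<close> this disc is the half-plane
  \<open>Re \<zeta> < -1/2\<close>, and \<open>1/\<psi>(w) = 1/w - 1/(1/a + w)\<close>. The circle condition on \<open>a\<close> says exactly
  \<open>Re (1/a) = 2\<close>, so \<open>Re (1/(1/a + w))\<close> is positive and \<open>Re \<zeta>\<close> decreases along orbits. The
  decrease degenerates only near the boundary point \<open>w = -2\<close>, but \<open>\<psi>\<close> moves that point to
  \<open>-2 + 4a\<close>, well inside; so two steps always decrease \<open>Re \<zeta>\<close> by a fixed amount. Hence
  \<open>|\<psi>\<^sup>n(w)| \<le> 1/|Re \<zeta>\<^sub>n|\<close> tends to \<open>0\<close> uniformly.\<close>

lemma Re_one_over: "Re (1 / z) = Re z / (cmod z)^2"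
  using Re_divide'[of 1 z] by simp

lemma mem_ball_minus_one: "w \<in> ball (-1) 1 \<longleftrightarrow> cmod (w + 1) < 1"
  by (simp add: dist_norm norm_minus_commute add.commute)

lemma mem_ball_minus_one_iff: "w \<in> ball (-1) 1 \<longleftrightarrow> w \<noteq> 0 \<and> Re (1 / w) < -1/2"
proof (cases "w = 0")
  case False
  then have pos: "(cmod w)^2 > 0" by simp
  have "w \<in> ball (-1) 1 \<longleftrightarrow> (cmod (w + 1))^2 < 1"
    unfolding mem_ball_minus_one by (simp add: abs_square_less_1)
  also have "\<dots> \<longleftrightarrow> (cmod w)^2 + 2 * Re w < 0"
    unfolding cmod_power2 by (simp add: power2_eq_square algebra_simps)
  also have "\<dots> \<longleftrightarrow> Re w / (cmod w)^2 < -1/2"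
    using pos_divide_less_eq[OF pos, of "Re w" "-1/2"] by linarith
  finally show ?thesis using False by (simp add: Re_one_over)
qed (simp add: dist_norm)

lemma two_step_decrease_le:
  fixes x :: "nat \<Rightarrow> real"
  assumes "\<And>n. x (Suc n) \<le> x n" and "\<And>n. x (n + 2) \<le> x n - \<eta>"
  shows "x n \<le> x 0 - real (n div 2) * \<eta>"
proof (induction n rule: nat_induct2)
  case (step n)
  have "x (n + 2) \<le> x 0 - real (n div 2) * \<eta> - \<eta>" using step assms(2)[of n] by linarith
  then show ?case by (simp add: algebra_simps)
qed (use assms(1)[of 0] in simp_all)

lemma uniform_limit_sequentially_majorant:
  assumes "\<And>n x. x \<in> S \<Longrightarrow> dist (f n x) (l x) \<le> b n" and "b \<longlonglongrightarrow> 0"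
  shows "uniform_limit S f l sequentially"
proof (rule uniform_limitI)
  fix e :: real assume "e > 0"
  then have "\<forall>\<^sub>F n in sequentially. b n < e" using assms(2) by (simp add: order_tendstoD)
  then show "\<forall>\<^sub>F n in sequentially. \<forall>x\<in>S. dist (f n x) (l x) < e"
    by (rule eventually_mono) (use assms(1) in \<open>fastforce intro: le_less_trans\<close>)
qed

locale circle_parameter =
  fixes a :: complex
  assumes on_circle: "cmod (a - 1/4) = 1/4" and nonzero: "a \<noteq> 0"
begin

lemma Re_eq_two_norm_sq: "Re a = 2 * (cmod a)^2"
proof -
  have "(cmod (a - 1/4))^2 = 1/16" unfolding on_circle by (simp add: power2_eq_square)
  then have "(Re a - 1/4)^2 + (Im a)^2 = 1/16" by (simp add: cmod_power2)
  then show ?thesis unfolding cmod_power2 by (simp add: power2_eq_square algebra_simps)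
qed

lemma Re_pos: "Re a > 0"
  using Re_eq_two_norm_sq nonzero by simp

lemma norm_le_half: "cmod a \<le> 1/2"
  using norm_triangle_ineq[of "a - 1/4" "1/4"] on_circle by simp

lemma Re_le_half: "Re a \<le> 1/2"
  using complex_Re_le_cmod[of a] norm_le_half by linarith

lemma Re_one_over_a: "Re (1 / a) = 2"
  using Re_eq_two_norm_sq nonzero by (simp add: Re_one_over)

definition psi :: "complex \<Rightarrow> complex" where
  "psi w = w + a * w^2"

definition drift :: real where
  "drift = 2 * (Re a)^2 / (9 * (cmod (1 / a) + 2)^2)"

lemma drift_pos: "drift > 0"
proof -
  have "cmod (1 / a) + 2 > 0" by (simp add: add_nonneg_pos)
  then show ?thesis using Re_pos by (simp add: drift_def)
qed

lemma Re_add_two_pos: "w \<in> ball (-1) 1 \<Longrightarrow> 2 + Re w > 0"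
  using abs_Re_le_cmod[of "w + 1"] unfolding mem_ball_minus_one by simp

lemma one_over_psi:
  assumes "w \<in> ball (-1) 1"
  shows "1 / a + w \<noteq> 0" and "psi w \<noteq> 0" and "1 / psi w = 1 / w - 1 / (1 / a + w)"
proof -
  have "Re (1 / a + w) > 0" using Re_add_two_pos[OF assms] Re_one_over_a by simp
  then show nz: "1 / a + w \<noteq> 0" by (metis less_irrefl zero_complex.simps(1))
  have "w \<noteq> 0" using assms mem_ball_minus_one_iff by blast
  have psi_eq: "psi w = a * w * (1 / a + w)"
    using nonzero by (simp add: psi_def power2_eq_square ring_distribs)
  then show "psi w \<noteq> 0" using nz \<open>w \<noteq> 0\<close> nonzero by simp
  show "1 / psi w = 1 / w - 1 / (1 / a + w)"
    unfolding psi_eq using nz \<open>w \<noteq> 0\<close> nonzero by (simp add: diff_frac_eq)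
qed

lemma Re_one_over_psi_le:
  assumes "w \<in> ball (-1) 1"
  shows "Re (1 / psi w) \<le> Re (1 / w) - (2 + Re w) / (cmod (1 / a) + 2)^2"
proof -
  have pos: "2 + Re w > 0" by (rule Re_add_two_pos[OF assms])
  have "cmod w \<le> 2"
    using assms norm_triangle_ineq4[of "w + 1" 1] unfolding mem_ball_minus_one by simp
  then have "cmod (1 / a + w) \<le> cmod (1 / a) + 2" using norm_triangle_ineq[of "1 / a" w] by linarith
  then have "(cmod (1 / a + w))^2 \<le> (cmod (1 / a) + 2)^2" by (rule power_mono) simp
  moreover have "cmod (1 / a + w) > 0" using one_over_psi(1)[OF assms] by simp
  ultimately have "(2 + Re w) / (cmod (1 / a) + 2)^2 \<le> (2 + Re w) / (cmod (1 / a + w))^2"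
    using pos by (intro divide_left_mono mult_pos_pos) auto
  also have "\<dots> = Re (1 / (1 / a + w))" using Re_one_over_a by (simp add: Re_one_over)
  finally show ?thesis using one_over_psi(3)[OF assms] by simp
qed

lemma Re_one_over_psi_le_self:
  assumes "w \<in> ball (-1) 1"
  shows "Re (1 / psi w) \<le> Re (1 / w)"
proof -
  have "(2 + Re w) / (cmod (1 / a) + 2)^2 \<ge> 0" using Re_add_two_pos[OF assms] by simp
  then show ?thesis using Re_one_over_psi_le[OF assms] by linarith
qed

lemma psi_in_ball:
  assumes "w \<in> ball (-1) 1"
  shows "psi w \<in> ball (-1) 1"
  using Re_one_over_psi_le_self[OF assms] one_over_psi(2)[OF assms] assms
  unfolding mem_ball_minus_one_iff by linarith

lemma psi_iter_in_ball: "w \<in> ball (-1) 1 \<Longrightarrow> (psi ^^ n) w \<in> ball (-1) 1"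
  by (induction n) (simp_all add: psi_in_ball del: mem_ball)

text \<open>Near the boundary point \<open>-2\<close>, where the one-step decrease degenerates: \<open>\<psi>(w) + 2 - 4a\<close>
  factors through \<open>w + 2\<close>.\<close>

lemma Re_psi_near_minus_two:
  assumes "w \<in> ball (-1) 1" and near: "cmod (w + 2) < 2 * Re a / 3"
  shows "2 + Re (psi w) > 2 * Re a"
proof -
  have "psi w + 2 - 4 * a = (w + 2) * (1 + a * (w - 2))"
    by (simp add: psi_def power2_eq_square algebra_simps)
  moreover have "cmod (1 + a * (w - 2)) \<le> 3"
  proof -
    have "cmod (w - 2) \<le> cmod (w + 1) + 3" using norm_triangle_ineq[of "w + 1" "-3"] by simp
    then have "cmod (w - 2) < 4" using assms(1) unfolding mem_ball_minus_one by simp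
    then have "cmod a * cmod (w - 2) \<le> 1/2 * 4" using norm_le_half by (intro mult_mono) auto
    then show ?thesis using norm_triangle_ineq[of 1 "a * (w - 2)"] by (simp add: norm_mult)
  qed
  ultimately have "cmod (psi w + 2 - 4 * a) \<le> cmod (w + 2) * 3"
    by (simp add: norm_mult mult_left_mono)
  also have "\<dots> < 2 * Re a" using near by simp
  finally show ?thesis using abs_Re_le_cmod[of "psi w + 2 - 4 * a"] by simp
qed

lemma Re_one_over_psi_psi_le:
  assumes w: "w \<in> ball (-1) 1"
  shows "Re (1 / psi (psi w)) \<le> Re (1 / w) - drift"
proof -
  define K where "K = (cmod (1 / a) + 2)^2"
  have "cmod (1 / a) + 2 > 0" by (simp add: add_nonneg_pos)
  then have K: "K > 0" by (simp add: K_def)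
  have drift_eq: "drift = 2 * (Re a)^2 / 9 / K" by (simp add: drift_def K_def)
  have w1: "psi w \<in> ball (-1) 1" by (rule psi_in_ball[OF w])
  note step0 = Re_one_over_psi_le[OF w, folded K_def]
  note step1 = Re_one_over_psi_le[OF w1, folded K_def]
  have "(2 + Re w) / K \<ge> drift \<or> (2 + Re (psi w)) / K \<ge> drift"
  proof (cases "2 + Re w \<ge> 2 * (Re a)^2 / 9")
    case True
    then have "2 * (Re a)^2 / 9 / K \<le> (2 + Re w) / K" using K by (intro divide_right_mono) auto
    then show ?thesis unfolding drift_eq by (rule disjI1)
  next
    case False
    have "(cmod (w + 2))^2 = (cmod (w + 1))^2 + 2 * (Re w + 1) + 1"
      unfolding cmod_power2 by (simp add: power2_eq_square algebra_simps)
    also have "\<dots> < 4 * (Re a)^2 / 9"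
      using w False abs_square_less_1[of "cmod (w + 1)"] unfolding mem_ball_minus_one by simp
    finally have "(cmod (w + 2))^2 < (2 * Re a / 3)^2" by (simp add: power_divide)
    then have "cmod (w + 2) < 2 * Re a / 3"
      by (rule power2_less_imp_less) (use Re_pos in simp)
    then have "2 + Re (psi w) > 2 * Re a" by (rule Re_psi_near_minus_two[OF w])
    moreover have "2 * (Re a)^2 / 9 \<le> 2 * Re a"
      using Re_pos Re_le_half by (simp add: power2_eq_square)
    ultimately have "2 * (Re a)^2 / 9 / K \<le> (2 + Re (psi w)) / K"
      using K by (intro divide_right_mono) auto
    then show ?thesis unfolding drift_eq by (rule disjI2)
  qed
  moreover have "(2 + Re w) / K \<ge> 0" "(2 + Re (psi w)) / K \<ge> 0"
    using Re_add_two_pos[OF w] Re_add_two_pos[OF w1] K by simp_all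
  ultimately show ?thesis using step0 step1 by linarith
qed

lemma Re_one_over_psi_iter_le:
  assumes "w \<in> ball (-1) 1"
  shows "Re (1 / (psi ^^ n) w) \<le> -1/2 - real (n div 2) * drift"
proof -
  have "Re (1 / (psi ^^ n) w) \<le> Re (1 / (psi ^^ 0) w) - real (n div 2) * drift"
  proof (rule two_step_decrease_le[where x = "\<lambda>n. Re (1 / (psi ^^ n) w)"])
    fix m
    show "Re (1 / (psi ^^ Suc m) w) \<le> Re (1 / (psi ^^ m) w)"
      using Re_one_over_psi_le_self[OF psi_iter_in_ball[OF assms]] by simp
    show "Re (1 / (psi ^^ (m + 2)) w) \<le> Re (1 / (psi ^^ m) w) - drift"
      using Re_one_over_psi_psi_le[OF psi_iter_in_ball[OF assms]] by simp
  qed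
  then show ?thesis using assms unfolding mem_ball_minus_one_iff by simp
qed

lemma norm_psi_iter_le:
  assumes "w \<in> ball (-1) 1"
  shows "cmod ((psi ^^ n) w) \<le> 1 / (1/2 + real (n div 2) * drift)"
proof -
  define u where "u = (psi ^^ n) w"
  have pos: "1/2 + real (n div 2) * drift > 0" using drift_pos by (simp add: add_pos_nonneg)
  have "1/2 + real (n div 2) * drift \<le> \<bar>Re (1 / u)\<bar>"
    using Re_one_over_psi_iter_le[OF assms, of n] pos unfolding u_def by linarith
  also have "\<dots> \<le> 1 / cmod u" using abs_Re_le_cmod[of "1 / u"] by (simp add: norm_divide)
  finally have "(1/2 + real (n div 2) * drift) * cmod u \<le> 1"
    using psi_iter_in_ball[OF assms, of n] unfolding mem_ball_minus_one_iff
    by (simp add: u_def pos_le_divide_eq)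
  then show ?thesis using pos by (simp add: u_def pos_le_divide_eq mult.commute)
qed

end

theorem mainTheorem2:
  fixes a :: complex and \<phi> :: "complex \<Rightarrow> complex"
  assumes "cmod (a - 1/4) = 1/4" and "a \<noteq> 0"
    and "\<And>z. \<phi> z = a * z^2 + (1 - 2*a) * z + a"
  shows "uniform_limit (ball 0 1) (\<lambda>n. (\<phi> ^^ n)) (\<lambda>_. 1) sequentially"
proof -
  interpret circle_parameter a using assms(1,2) by unfold_locales
  have "psi w + 1 = \<phi> (w + 1)" for w
    by (simp add: assms(3) psi_def power2_eq_square algebra_simps)
  then have conj: "(\<phi> ^^ n) (w + 1) = (psi ^^ n) w + 1" for n w
    using funpow_commute[where f = "\<lambda>w. w + 1" and c = psi and c' = \<phi> and k = n and s = w]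
    by simp
  show ?thesis
  proof (rule uniform_limit_sequentially_majorant)
    fix n and z :: complex assume "z \<in> ball 0 1"
    then have "z - 1 \<in> ball (-1) 1" by (simp add: dist_norm)
    then show "dist ((\<phi> ^^ n) z) 1 \<le> 1 / (1/2 + real (n div 2) * drift)"
      using norm_psi_iter_le conj[of n "z - 1"] by (simp add: dist_norm)
  qed (use drift_pos in real_asymp)
qed

end
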